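(* Let $f:\mathbb{R}^\ell\times\mathbb{R}^m\to\mathbb{R}^\ell$ be $C^1$, let $\Lambda$ be a parameter shift with limits $\lambda_\pm$, and let $X$ define a stable path with endpoints $X_\pm$. For $r>0$ let $\{x_n^r\}_{n\in\mathbb{Z}}$ be the unique solution of $x_{n+1}=f(x_n,\Lambda(rn))$ with $\lim_{n\to-\infty}x_n^r=X_-$. Then there exists $r_0>0$ such that for every $r\in(0,r_0)$, $\lim_{n\to\infty}x_n^r=X_+$.
   Context: A parameter shift is a $C^1$ function $\Lambda:\mathbb{R}\to\mathbb{R}^m$ with $\lim_{s\to\pm\infty}\Lambda(s)=\lambda_\pm$ and $\lim_{s\to\pm\infty}\Lambda'(s)=0$. A stable path is given by $X:\mathbb{R}\to\mathbb{R}^\ell$ such that: $X(s)$ is a fixed point of $f(\cdot,\Lambda(s))$ for every $s$; $\{(s,X(s))\}$ is a connected curve; the limits $X_\pm=\lim_{s\to\pm\infty}X(s)$ exist and are fixed points of $f(\cdot,\lambda_\pm)$; and the spectral radius of $D_xf(X(s),\Lambda(s))$ is $<1$ for all $s\in\mathbb{R}\cup\{\pm\infty\}$ (with $X(\pm\infty)=X_\pm$, $\Lambda(\pm\infty)=\lambda_\pm$). It is known that for each $r>0$ there is a unique solution with $x_n^r\to X_-$ as $n\to-\infty$. *)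

theory Defs
  imports "HOL-Analysis.Analysis"
begin

definition C1_map :: "('a::euclidean_space \<Rightarrow> 'b::euclidean_space) \<Rightarrow> bool" where
  "C1_map g \<longleftrightarrow> (\<exists>g' :: 'a \<Rightarrow> ('a \<Rightarrow>\<^sub>L 'b).
      (\<forall>z. (g has_derivative blinfun_apply (g' z)) (at z)) \<and> continuous_on UNIV g')"

definition spec_radius :: "real^'n^'n \<Rightarrow> real" where
  "spec_radius A = Max {cmod z | z. det (mat z - (\<chi> i j. complex_of_real (A $ i $ j))) = 0}"

definition Dx :: "((real^'l) \<times> (real^'m) \<Rightarrow> real^'l) \<Rightarrow> real^'l \<Rightarrow> real^'m \<Rightarrow> real^'l^'l" where
  "Dx f x lam = matrix (frechet_derivative (\<lambda>y. f (y, lam)) (at x))"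

definition parameter_shift :: "(real \<Rightarrow> real^'m) \<Rightarrow> real^'m \<Rightarrow> real^'m \<Rightarrow> bool" where
  "parameter_shift \<Lambda> lm lp \<longleftrightarrow>
     (\<exists>\<Lambda>'. (\<forall>s. (\<Lambda> has_vector_derivative \<Lambda>' s) (at s)) \<and> continuous_on UNIV \<Lambda>' \<and>
        (\<Lambda> \<longlongrightarrow> lm) at_bot \<and> (\<Lambda> \<longlongrightarrow> lp) at_top \<and>
        (\<Lambda>' \<longlongrightarrow> 0) at_bot \<and> (\<Lambda>' \<longlongrightarrow> 0) at_top)"

definition stable_path ::
  "((real^'l) \<times> (real^'m) \<Rightarrow> real^'l) \<Rightarrow> (real \<Rightarrow> real^'m) \<Rightarrow> real^'m \<Rightarrow> real^'m \<Rightarrow>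
   (real \<Rightarrow> real^'l) \<Rightarrow> real^'l \<Rightarrow> real^'l \<Rightarrow> bool" where
  "stable_path f \<Lambda> lm lp X Xm Xp \<longleftrightarrow>
     (\<forall>s. f (X s, \<Lambda> s) = X s) \<and>
     connected (range (\<lambda>s. (s, X s))) \<and>
     (X \<longlongrightarrow> Xm) at_bot \<and> (X \<longlongrightarrow> Xp) at_top \<and>
     f (Xm, lm) = Xm \<and> f (Xp, lp) = Xp \<and>
     (\<forall>s. spec_radius (Dx f (X s) (\<Lambda> s)) < 1) \<and>
     spec_radius (Dx f Xm lm) < 1 \<and> spec_radius (Dx f Xp lp) < 1"

end

(*
  Since D_x f has spectral radius < 1 on the compact set K formed by the points (X s, \<Lambda> s)
  and the two endpoints, a single N makes every N-fold composition of f (-, \<mu>) with \<mu> near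
  the parameter of a point q of K a 1/2-contraction near q, uniformly on K.  For a small rate r
  the parameters \<Lambda> (r n) change little during N steps, so every block of N steps halves the
  distance from x_n to X (r n), up to an error that stays uniformly small and tends to 0 as
  n \<rightarrow> \<infinity>.  Since x_n \<rightarrow> X_- at -\<infinity>, the solution starts close to the path, stays close,
  and its distance to the path tends to 0, hence x_n \<rightarrow> X_+.

  Compactness of K and uniform continuity of the path require continuity of X, which follows
  from the connectedness of its graph: near s0 the contraction confines the fixed points of
  f (-, \<Lambda> s) to a small ball around X s0 or keeps them away from it, and a connected graph
  cannot jump between the two.
*)

theory Submission
  imports Defs "Jordan_Normal_Form.Spectral_Radius"
begin

no_notation Matrix.vec_index (infixl "$" 100)
no_notation Matrix.scalar_prod (infix "\<bullet>" 70)

definition fin_enum :: "nat \<Rightarrow> 'n::finite" where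
  "fin_enum = (SOME h. bij_betw h {..<CARD('n)} UNIV)"

definition fin_index :: "'n::finite \<Rightarrow> nat" where
  "fin_index = the_inv_into {..<CARD('n)} fin_enum"

lemma bij_betw_fin_enum: "bij_betw (fin_enum :: nat \<Rightarrow> 'n::finite) {..<CARD('n)} UNIV"
proof -
  have "\<exists>h. bij_betw h {..<CARD('n)} (UNIV :: 'n set)"
    using ex_bij_betw_nat_finite[of "UNIV :: 'n set"] by (simp add: atLeast0LessThan)
  then show ?thesis
    unfolding fin_enum_def by (rule someI_ex)
qed

lemma fin_index_less [simp]: "fin_index (k :: 'n::finite) < CARD('n)"
  using bij_betw_the_inv_into[OF bij_betw_fin_enum] bij_betw_apply
  unfolding fin_index_def by fastforce

lemma fin_enum_index [simp]: "fin_enum (fin_index k) = (k :: 'n::finite)"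
  unfolding fin_index_def by (rule f_the_inv_into_f_bij_betw[OF bij_betw_fin_enum]) simp

lemma fin_index_enum [simp]: "i < CARD('n) \<Longrightarrow> fin_index (fin_enum i :: 'n::finite) = i"
  unfolding fin_index_def
  by (rule the_inv_into_f_f[OF bij_betw_imp_inj_on[OF bij_betw_fin_enum]]) simp

lemma sum_fin_enum: "(\<Sum>i<CARD('n). g (fin_enum i :: 'n::finite)) = sum g UNIV"
  using sum.reindex_bij_betw[OF bij_betw_fin_enum, of g] by simp

definition to_mat :: "'a::comm_ring_1^'n::finite^'n \<Rightarrow> 'a mat" where
  "to_mat C = Matrix.mat CARD('n) CARD('n) (\<lambda>(i, j). C $ fin_enum i $ fin_enum j)"

definition to_vec :: "'a::comm_ring_1^'n::finite \<Rightarrow> 'a Matrix.vec" where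
  "to_vec w = Matrix.vec CARD('n) (\<lambda>i. w $ fin_enum i)"

lemma to_mat_carrier [simp]: "to_mat (C :: 'a::comm_ring_1^'n::finite^'n) \<in> carrier_mat CARD('n) CARD('n)"
  unfolding to_mat_def by simp

lemma dim_row_to_mat [simp]: "dim_row (to_mat (C :: 'a::comm_ring_1^'n::finite^'n)) = CARD('n)"
  unfolding to_mat_def by simp

lemma dim_col_to_mat [simp]: "dim_col (to_mat (C :: 'a::comm_ring_1^'n::finite^'n)) = CARD('n)"
  unfolding to_mat_def by simp

lemma to_vec_carrier [simp]: "to_vec (w :: 'a::comm_ring_1^'n::finite) \<in> carrier_vec CARD('n)"
  unfolding to_vec_def by simp

lemma to_mat_mult: "to_mat (C ** D) = to_mat C * to_mat (D :: 'a::comm_ring_1^'n::finite^'n)"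
  by (rule eq_matI) (auto simp: to_mat_def matrix_matrix_mult_def scalar_prod_def
      atLeast0LessThan intro: sum_fin_enum[symmetric])

lemma to_mat_mult_vec: "to_mat C *\<^sub>v to_vec w = to_vec (C *v (w :: 'a::comm_ring_1^'n::finite))"
  by (rule eq_vecI) (auto simp: to_mat_def to_vec_def matrix_vector_mult_def scalar_prod_def
      atLeast0LessThan intro: sum_fin_enum)

lemma to_vec_smult: "to_vec (c *s w) = c \<cdot>\<^sub>v to_vec (w :: 'a::comm_ring_1^'n::finite)"
  unfolding to_vec_def by (rule eq_vecI) auto

lemma to_vec_inject [simp]: "to_vec w = to_vec u \<longleftrightarrow> w = (u :: 'a::comm_ring_1^'n::finite)"
proof
  assume "to_vec w = to_vec u"
  then have "w $ fin_enum i = u $ fin_enum i" if "i < CARD('n)" for i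
    using that unfolding to_vec_def by (metis index_vec)
  then show "w = u"
    by (metis Finite_Cartesian_Product.vec_eq_iff fin_enum_index fin_index_less)
qed simp

lemma to_vec_zero [simp]: "to_vec (0 :: 'a::comm_ring_1^'n::finite) = 0\<^sub>v CARD('n)"
  unfolding to_vec_def by (rule eq_vecI) auto

lemma carrier_vec_to_vec:
  assumes "v \<in> carrier_vec CARD('n)"
  obtains w :: "'a::comm_ring_1^'n::finite" where "v = to_vec w"
proof
  show "v = to_vec (\<chi> k. Matrix.vec_index v (fin_index k) :: 'a^'n)"
    using assms unfolding to_vec_def by (intro eq_vecI) auto
qed

lemma eigenvalue_to_mat_iff:
  "eigenvalue (to_mat C) z \<longleftrightarrow> (\<exists>w. w \<noteq> 0 \<and> C *v w = z *s (w :: 'a::comm_ring_1^'n::finite))"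
proof
  assume "eigenvalue (to_mat C) z"
  then obtain v where v: "v \<in> carrier_vec CARD('n)" "v \<noteq> 0\<^sub>v CARD('n)" "to_mat C *\<^sub>v v = z \<cdot>\<^sub>v v"
    unfolding eigenvalue_def eigenvector_def by auto
  obtain w :: "'a^'n" where "v = to_vec w"
    using v(1) by (rule carrier_vec_to_vec)
  with v have "w \<noteq> 0" "to_vec (C *v w) = to_vec (z *s w)"
    by (auto simp: to_mat_mult_vec to_vec_smult)
  then show "\<exists>w. w \<noteq> 0 \<and> C *v w = z *s w"
    by auto
next
  assume "\<exists>w. w \<noteq> 0 \<and> C *v w = z *s w"
  then obtain w where "w \<noteq> 0" "C *v w = z *s w"
    by blast
  then have "eigenvector (to_mat C) (to_vec w) z"
    unfolding eigenvector_def by (auto simp: to_mat_mult_vec to_vec_smult simp flip: to_vec_zero)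
  then show "eigenvalue (to_mat C) z"
    unfolding eigenvalue_def by blast
qed

lemma spectrum_to_mat_iff:
  "z \<in> spectrum (to_mat C) \<longleftrightarrow> (\<exists>w. w \<noteq> 0 \<and> C *v w = z *s (w :: 'a::comm_ring_1^'n::finite))"
  unfolding spectrum_def using eigenvalue_to_mat_iff by simp

lemma det_char_eq_0_iff:
  fixes C :: "'a::field^'n::finite^'n"
  shows "Determinants.det (Finite_Cartesian_Product.mat z - C) = 0 \<longleftrightarrow> (\<exists>w. w \<noteq> 0 \<and> C *v w = z *s w)"
proof -
  have "Finite_Cartesian_Product.mat z *v w = z *s w" for w
    by (simp add: Finite_Cartesian_Product.vec_eq_iff matrix_vector_mult_def
        Finite_Cartesian_Product.mat_def if_distrib if_distribR cong del: if_weak_cong)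
  then have "(Finite_Cartesian_Product.mat z - C) *v w = z *s w - C *v w" for w
    by (simp add: matrix_vector_mult_diff_rdistrib)
  moreover have "Determinants.det B = 0 \<longleftrightarrow> (\<exists>w. w \<noteq> 0 \<and> B *v w = 0)" for B :: "'a^'n^'n"
    using invertible_det_nz[of B] invertible_left_inverse[of B] matrix_left_invertible_ker[of B]
    by auto
  ultimately show ?thesis
    by (metis eq_iff_diff_eq_0)
qed

definition cmatrix :: "real^'n^'n \<Rightarrow> complex^'n^'n" where
  "cmatrix A = (\<chi> i j. complex_of_real (A $ i $ j))"

lemma cmatrix_mult: "cmatrix (A ** B) = cmatrix A ** cmatrix (B :: real^'n::finite^'n)"
  by (simp add: cmatrix_def matrix_matrix_mult_def Finite_Cartesian_Product.vec_eq_iff)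

lemma cmatrix_one: "cmatrix (Finite_Cartesian_Product.mat 1) = Finite_Cartesian_Product.mat 1"
  by (simp add: cmatrix_def Finite_Cartesian_Product.mat_def Finite_Cartesian_Product.vec_eq_iff)

lemma cmatrix_scaleR_mult_vec: "cmatrix (c *\<^sub>R A) *v w = complex_of_real c *s (cmatrix A *v w)"
  by (simp add: cmatrix_def matrix_vector_mult_def Finite_Cartesian_Product.vec_eq_iff
      sum_distrib_left mult_ac)

lemma spec_radius_eq_spectral_radius:
  "spec_radius (A :: real^'n::finite^'n) = spectral_radius (to_mat (cmatrix A))"
proof -
  have "{cmod z |z. Determinants.det (Finite_Cartesian_Product.mat z - cmatrix A) = 0}
      = norm ` spectrum (to_mat (cmatrix A))"
    by (auto simp: det_char_eq_0_iff spectrum_to_mat_iff[symmetric])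
  then show ?thesis
    unfolding spec_radius_def spectral_radius_def cmatrix_def by simp
qed

lemma eigenvalue_le_spec_radius:
  assumes "w \<noteq> 0" "cmatrix A *v w = z *s w"
  shows "cmod z \<le> spec_radius (A :: real^'n::finite^'n)"
proof -
  have "z \<in> spectrum (to_mat (cmatrix A))"
    using assms spectrum_to_mat_iff by blast
  then show ?thesis
    unfolding spec_radius_eq_spectral_radius
    by (intro spectral_radius_mem_max(2)[OF to_mat_carrier]) auto
qed

lemma spec_radius_attained:
  obtains z w where "w \<noteq> 0" "cmatrix A *v w = z *s w" "cmod z = spec_radius (A :: real^'n::finite^'n)"
proof -
  obtain z where "z \<in> spectrum (to_mat (cmatrix A))" "cmod z = spec_radius A"
    using spectral_radius_mem_max(1)[OF to_mat_carrier[of "cmatrix A"]]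
    by (auto simp: spec_radius_eq_spectral_radius)
  then show ?thesis
    using that spectrum_to_mat_iff by blast
qed

lemma spec_radius_scaleR_le:
  assumes "0 < c"
  shows "spec_radius (c *\<^sub>R A) \<le> c * spec_radius (A :: real^'n::finite^'n)"
proof -
  obtain z w where w: "w \<noteq> 0" "cmatrix (c *\<^sub>R A) *v w = z *s w"
    and z: "cmod z = spec_radius (c *\<^sub>R A)"
    by (rule spec_radius_attained)
  have "cmatrix A *v w = inverse (complex_of_real c) *s (cmatrix (c *\<^sub>R A) *v w)"
    using assms by (simp add: cmatrix_scaleR_mult_vec vector_smult_assoc)
  also have "\<dots> = (z / complex_of_real c) *s w"
    unfolding w(2) by (simp add: vector_smult_assoc divide_inverse mult.commute)
  finally have "cmod (z / complex_of_real c) \<le> spec_radius A"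
    by (rule eigenvalue_le_spec_radius[OF w(1)])
  then have "cmod z / c \<le> spec_radius A"
    using assms by (simp add: norm_divide)
  then show ?thesis
    using z assms by (simp add: field_simps)
qed

lemma linear_blinfun_apply: "linear (blinfun_apply L)"
  by (simp add: blinfun.bounded_linear_right bounded_linear.linear)

primrec blinfun_pow :: "('a::real_normed_vector \<Rightarrow>\<^sub>L 'a) \<Rightarrow> nat \<Rightarrow> 'a \<Rightarrow>\<^sub>L 'a" where
  "blinfun_pow L 0 = id_blinfun"
| "blinfun_pow L (Suc k) = blinfun_pow L k o\<^sub>L L"

lemma blinfun_pow_add: "blinfun_pow L (j + k) = blinfun_pow L j o\<^sub>L blinfun_pow L k"
  by (induction k) (auto intro: blinfun_eqI)

lemma blinfun_pow_Suc': "blinfun_pow L (Suc k) = L o\<^sub>L blinfun_pow L k"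
proof (rule blinfun_eqI)
  fix x
  have "blinfun_pow L (1 + k) x = (blinfun_pow L 1 o\<^sub>L blinfun_pow L k) x"
    by (simp only: blinfun_pow_add)
  then show "blinfun_pow L (Suc k) x = (L o\<^sub>L blinfun_pow L k) x"
    by simp
qed

lemma norm_blinfun_pow_mult: "norm (blinfun_pow L (k * m)) \<le> norm (blinfun_pow L k) ^ m"
proof (induction m)
  case 0
  show ?case
    by (simp add: norm_blinfun_id_le)
next
  case (Suc m)
  have "norm (blinfun_pow L (k * Suc m)) \<le> norm (blinfun_pow L k) * norm (blinfun_pow L (k * m))"
    by (metis blinfun_pow_add mult_Suc_right norm_blinfun_compose)
  also have "\<dots> \<le> norm (blinfun_pow L k) ^ Suc m"
    using Suc by (simp add: mult_left_mono)
  finally show ?case .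
qed

lemma blinfun_pow_scaleR: "blinfun_pow (c *\<^sub>R L) k = c ^ k *\<^sub>R blinfun_pow L k"
  by (induction k) (auto intro: blinfun_eqI simp: blinfun.scaleR_left blinfun.scaleR_right)

lemma isCont_blinfun_pow [continuous_intros]:
  "isCont G q \<Longrightarrow> isCont (\<lambda>q. blinfun_pow (G q) k) q"
  by (induction k) (auto intro: continuous_intros)

lemma matrix_blinfun_scaleR:
  "matrix (blinfun_apply (c *\<^sub>R L)) = c *\<^sub>R matrix (blinfun_apply (L :: (real^'n::finite) \<Rightarrow>\<^sub>L (real^'m::finite)))"
  by (simp add: matrix_def Finite_Cartesian_Product.vec_eq_iff blinfun.scaleR_left)

lemma to_mat_cmatrix_blinfun_pow:
  fixes L :: "(real^'n::finite) \<Rightarrow>\<^sub>L (real^'n)"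
  shows "to_mat (cmatrix (matrix (blinfun_pow L k))) = to_mat (cmatrix (matrix L)) ^\<^sub>m k"
proof (induction k)
  case 0
  have "to_mat (Finite_Cartesian_Product.mat 1 :: complex^'n^'n) = 1\<^sub>m CARD('n)"
    by (rule eq_matI) (auto simp: to_mat_def Finite_Cartesian_Product.mat_def dest: arg_cong[of _ _ fin_index])
  then show ?case
    by (simp add: id_def[symmetric] matrix_id_mat_1 cmatrix_one)
next
  case (Suc k)
  have "matrix (blinfun_pow L (Suc k)) = matrix (blinfun_pow L k) ** matrix L"
    by (simp add: blinfun_compose.rep_eq matrix_compose linear_blinfun_apply)
  then show ?case
    using Suc by (simp only: cmatrix_mult to_mat_mult pow_mat.simps)
qed

lemma bounded_blinfun_pow:
  fixes L :: "(real^'n::finite) \<Rightarrow>\<^sub>L (real^'n)"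
  assumes "spec_radius (matrix L) < 1"
  obtains B where "\<And>k. norm (blinfun_pow L k) \<le> B"
proof -
  obtain c where c: "\<And>k. norm_bound (to_mat (cmatrix (matrix L)) ^\<^sub>m k) c"
    using spectral_radius_jnf_norm_bound_less_1_upper_triangular[OF to_mat_carrier] assms
    by (auto simp: spec_radius_eq_spectral_radius)
  have "\<bar>matrix (blinfun_pow L k) $ i $ j\<bar> \<le> c" for k i j
  proof -
    have "norm_bound (to_mat (cmatrix (matrix (blinfun_pow L k)))) c"
      using c by (simp add: to_mat_cmatrix_blinfun_pow)
    then have "cmod (to_mat (cmatrix (matrix (blinfun_pow L k))) $$ (fin_index i, fin_index j)) \<le> c"
      unfolding norm_bound_def by simp
    then show ?thesis
      by (simp add: to_mat_def cmatrix_def)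
  qed
  then have "onorm (blinfun_apply (blinfun_pow L k)) \<le> real CARD('n) * real CARD('n) * c" for k
    using onorm_le_matrix_component[of "matrix (blinfun_pow L k)"] by (simp add: linear_blinfun_apply)
  then show ?thesis
    using that by (metis norm_blinfun.rep_eq)
qed

lemma blinfun_pow_tendsto_0:
  fixes L :: "(real^'n::finite) \<Rightarrow>\<^sub>L (real^'n)"
  assumes "spec_radius (matrix L) < 1"
  shows "(\<lambda>k. norm (blinfun_pow L k)) \<longlonglongrightarrow> 0"
proof -
  \<comment> \<open>The JNF bound only gives bounded powers; rescaling by \<open>\<rho>\<close> turns it into decay like \<open>\<rho> ^ k\<close>.\<close>
  define \<rho> where "\<rho> = (spec_radius (matrix L) + 1) / 2"
  have "0 \<le> spec_radius (matrix L)"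
    by (metis norm_ge_zero spec_radius_attained)
  then have \<rho>: "0 < \<rho>" "\<rho> < 1" "spec_radius (matrix L) < \<rho>"
    using assms by (auto simp: \<rho>_def)
  have "spec_radius (matrix ((1 / \<rho>) *\<^sub>R L)) \<le> spec_radius (matrix L) / \<rho>"
    using spec_radius_scaleR_le[of "1 / \<rho>"] \<rho> by (simp add: matrix_blinfun_scaleR)
  also have "\<dots> < 1"
    using \<rho> by simp
  finally obtain B where B: "\<And>k. norm (blinfun_pow ((1 / \<rho>) *\<^sub>R L) k) \<le> B"
    by (rule bounded_blinfun_pow) blast
  have "norm (blinfun_pow L k) = \<rho> ^ k * norm (blinfun_pow ((1 / \<rho>) *\<^sub>R L) k)" for k
    using \<rho>(1) by (simp add: blinfun_pow_scaleR power_divide)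
  then have "\<forall>k. norm (norm (blinfun_pow L k)) \<le> B * \<rho> ^ k"
    using B \<rho>(1) by (simp add: mult.commute mult_left_mono)
  moreover have "(\<lambda>k. B * \<rho> ^ k) \<longlonglongrightarrow> 0"
    using \<rho> by (simp add: LIMSEQ_power_zero tendsto_mult_right_zero)
  ultimately show ?thesis
    by (rule Lim_null_comparison[OF always_eventually])
qed

lemma uniform_blinfun_pow_less:
  fixes G :: "'a::t2_space \<Rightarrow> ('b::real_normed_vector \<Rightarrow>\<^sub>L 'b)"
  assumes K: "compact K" and G: "\<And>q. isCont G q"
    and decay: "\<And>q. q \<in> K \<Longrightarrow> (\<lambda>k. norm (blinfun_pow (G q) k)) \<longlonglongrightarrow> 0"
    and e: "0 < e" "e \<le> 1"
  obtains N where "N > 0" "\<And>q. q \<in> K \<Longrightarrow> norm (blinfun_pow (G q) N) < e"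
proof -
  have "\<forall>q\<in>K. \<exists>n>0. norm (blinfun_pow (G q) n) < e"
  proof
    fix q assume "q \<in> K"
    have "eventually (\<lambda>n. 0 < n \<and> norm (blinfun_pow (G q) n) < e) sequentially"
      using order_tendstoD(2)[OF decay[OF \<open>q \<in> K\<close>] e(1)] eventually_gt_at_top[of 0]
      by eventually_elim simp
    then show "\<exists>n>0. norm (blinfun_pow (G q) n) < e"
      unfolding eventually_sequentially by blast
  qed
  then obtain n where n: "\<forall>q\<in>K. n q > 0 \<and> norm (blinfun_pow (G q) (n q)) < e"
    by (rule bchoice[elim_format]) blast
  define U where "U q = {z. norm (blinfun_pow (G z) (n q)) < e}" for q
  have "open (U q)" for q
    unfolding U_def
    by (intro open_Collect_less continuous_on_norm continuous_at_imp_continuous_on ballI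
        isCont_blinfun_pow G continuous_on_const)
  moreover have "K \<subseteq> (\<Union>q\<in>K. U q)"
    using n unfolding U_def by blast
  ultimately obtain F where F: "F \<subseteq> K" "finite F" "K \<subseteq> (\<Union>q\<in>F. U q)"
    by (rule compactE_image[OF K])
  \<comment> \<open>A common multiple of the local exponents, since \<open>\<parallel>L ^ (k * m)\<parallel> \<le> \<parallel>L ^ k\<parallel> ^ m\<close>.\<close>
  define N where "N = (\<Prod>q\<in>F. n q)"
  show ?thesis
  proof
    show "N > 0"
      unfolding N_def using F n by (auto intro!: prod_pos)
    fix z assume "z \<in> K"
    then obtain q where q: "q \<in> F" "norm (blinfun_pow (G z) (n q)) < e"
      using F unfolding U_def by blast
    have "n q dvd N"
      unfolding N_def using F(2) q(1) by (rule dvd_prodI)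
    then obtain m where m: "N = n q * m" ..
    with \<open>N > 0\<close> have "m > 0"
      by (cases m) auto
    have "norm (blinfun_pow (G z) N) \<le> norm (blinfun_pow (G z) (n q)) ^ m"
      unfolding m by (rule norm_blinfun_pow_mult)
    also have "\<dots> \<le> norm (blinfun_pow (G z) (n q))"
      using q(2) e(2) \<open>m > 0\<close> by (simp add: power_le_one_iff power_decreasing[of 1, simplified])
    finally show "norm (blinfun_pow (G z) N) < e"
      using q(2) by linarith
  qed
qed

lemma connected_graph_IVT:
  fixes X :: "real \<Rightarrow> 'a::topological_space" and \<phi> :: "'a \<Rightarrow> real"
  assumes conn: "connected (range (\<lambda>s. (s, X s)))" and \<phi>: "continuous_on UNIV \<phi>"
    and "a \<le> b" and opposite: "\<phi> (X a) * \<phi> (X b) < 0"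
  shows "\<exists>s\<in>{a..b}. \<phi> (X s) = 0"
proof -
  have ordered: "\<exists>s\<in>{a..b}. \<psi> (X s) = 0"
    if \<psi>: "continuous_on UNIV \<psi>" and signs: "\<psi> (X a) < 0" "0 < \<psi> (X b)" for \<psi> :: "'a \<Rightarrow> real"
  proof (rule ccontr)
    assume no_zero: "\<not> ?thesis"
    define U where "U = {z. fst z < a} \<union> {z. fst z < b \<and> \<psi> (snd z) < 0}"
    define V where "V = {z. b < fst z} \<union> {z. a < fst z \<and> 0 < \<psi> (snd z)}"
    have "open U" "open V"
      unfolding U_def V_def using \<psi>
      by (auto intro!: open_Un open_Collect_conj open_Collect_less continuous_intros
          continuous_on_compose2[of UNIV \<psi>])
    moreover have "U \<inter> V \<inter> range (\<lambda>s. (s, X s)) = {}"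
      unfolding U_def V_def using \<open>a \<le> b\<close> by auto
    moreover have "(s, X s) \<in> U \<union> V" for s
    proof (cases "a \<le> s \<and> s \<le> b")
      case True
      then have "\<psi> (X s) \<noteq> 0"
        using no_zero by auto
      then show ?thesis
        unfolding U_def V_def using signs True by (cases "s = a"; cases "s = b") auto
    qed (auto simp: U_def V_def)
    then have "range (\<lambda>s. (s, X s)) \<subseteq> U \<union> V"
      by blast
    ultimately have "U \<inter> range (\<lambda>s. (s, X s)) = {} \<or> V \<inter> range (\<lambda>s. (s, X s)) = {}"
      by (rule connectedD[OF conn])
    moreover have "a < b"
      using \<open>a \<le> b\<close> signs by (cases "a = b") auto
    then have "(a, X a) \<in> U" "(b, X b) \<in> V"
      unfolding U_def V_def using signs by auto
    ultimately show False
      by blast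
  qed
  from opposite consider "\<phi> (X a) < 0" "0 < \<phi> (X b)" | "0 < \<phi> (X a)" "\<phi> (X b) < 0"
    by (auto simp: mult_less_0_iff)
  then show ?thesis
  proof cases
    case 1
    then show ?thesis
      using ordered[OF \<phi>] by blast
  next
    case 2
    then have "\<exists>s\<in>{a..b}. - \<phi> (X s) = 0"
      using \<phi> by (intro ordered) (auto intro: continuous_intros)
    then show ?thesis
      by simp
  qed
qed

lemma tanh_lipschitz: "1-lipschitz_on UNIV (tanh :: real \<Rightarrow> real)"
proof (rule bounded_derivative_imp_lipschitz)
  fix x :: real
  have "((\<lambda>x. tanh x) has_real_derivative (1 - tanh x ^ 2) * 1) (at x)"
    by (rule has_field_derivative_tanh) (simp_all add: DERIV_ident)
  then show "(tanh has_derivative (*) (1 - tanh x ^ 2)) (at x within UNIV)"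
    by (simp add: has_field_derivative_def)
  have "\<bar>1 - tanh x ^ 2\<bar> \<le> 1"
  proof -
    have "tanh x ^ 2 < 1"
      using tanh_real_bounds[of x] by (simp add: abs_square_less_1 abs_less_iff)
    then show ?thesis
      by simp
  qed
  then show "onorm ((*) (1 - tanh x ^ 2)) \<le> 1"
    by (intro onorm_le) (simp add: abs_mult mult_left_le_one_le)
qed auto

lemma tanh_reparametrization:
  fixes Y :: "real \<Rightarrow> 'a::topological_space"
  assumes Y: "\<And>s. isCont Y s" and lim: "(Y \<longlongrightarrow> a) at_bot" "(Y \<longlongrightarrow> b) at_top"
  shows "\<exists>g. continuous_on {-1..1} g \<and> g ` {-1..1} = range Y \<union> {a, b} \<and> (\<forall>s. g (tanh s) = Y s)"
proof -
  define g where "g t = (if t \<le> -1 then a else if 1 \<le> t then b else Y (artanh t))" for t :: real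
  have g_tanh: "g (tanh s) = Y s" for s
    using tanh_real_bounds[of s] by (simp add: g_def artanh_tanh_real)
  have "continuous_on {-1..1} g"
  proof (rule continuous_on_IccI)
    have "eventually (\<lambda>t. Y (artanh t) = g t) (at_right (-1))"
      using eventually_at_right_real[of "-1" 1, simplified] by eventually_elim (simp add: g_def)
    moreover have "((\<lambda>t. Y (artanh t)) \<longlongrightarrow> a) (at_right (-1))"
      by (rule filterlim_compose[OF lim(1) artanh_real_at_right_1])
    ultimately show "(g \<longlongrightarrow> g (-1)) (at_right (-1))"
      by (simp add: g_def[of "-1"] tendsto_cong)
    have "eventually (\<lambda>t. Y (artanh t) = g t) (at_left 1)"
      using eventually_at_left_real[of "-1" 1, simplified] by eventually_elim (simp add: g_def)
    moreover have "((\<lambda>t. Y (artanh t)) \<longlongrightarrow> b) (at_left 1)"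
      by (rule filterlim_compose[OF lim(2) artanh_real_at_left_1])
    ultimately show "(g \<longlongrightarrow> g 1) (at_left 1)"
      by (simp add: g_def[of 1] tendsto_cong)
  next
    fix t :: real assume t: "-1 < t" "t < 1"
    have "((\<lambda>t. Y (artanh t)) \<longlongrightarrow> g t) (at t)"
      using continuous_at_compose[unfolded o_def, OF isCont_artanh[OF t] Y] t
      by (simp add: g_def isCont_def)
    then show "(g \<longlongrightarrow> g t) (at t)"
      by (rule Lim_transform_within_open[of _ _ _ _ "{-1<..<1}"]) (use t in \<open>simp_all add: g_def\<close>)
  qed simp
  moreover have "g ` {-1..1} = range Y \<union> {a, b}"
  proof
    show "g ` {-1..1} \<subseteq> range Y \<union> {a, b}"
      by (auto simp: g_def)
    have "Y s \<in> g ` {-1..1}" for s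
      using tanh_real_bounds[of s] g_tanh[of s] by (intro image_eqI[where x = "tanh s"]) auto
    moreover have "a = g (-1)" "b = g 1"
      by (simp_all add: g_def)
    ultimately show "range Y \<union> {a, b} \<subseteq> g ` {-1..1}"
      by auto
  qed
  ultimately show ?thesis
    using g_tanh by blast
qed

lemma compact_range_Un_limits:
  fixes Y :: "real \<Rightarrow> 'a::topological_space"
  assumes "\<And>s. isCont Y s" "(Y \<longlongrightarrow> a) at_bot" "(Y \<longlongrightarrow> b) at_top"
  shows "compact (range Y \<union> {a, b})"
proof -
  from tanh_reparametrization[OF assms] obtain g
    where g: "continuous_on {-1..1} g" "g ` {-1..1} = range Y \<union> {a, b}" "\<forall>s. g (tanh s) = Y s"
    by (elim exE conjE)
  have "compact (g ` {-1..1})"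
    by (rule compact_continuous_image[OF g(1) compact_Icc])
  then show ?thesis
    by (simp only: g(2))
qed

lemma uniformly_continuous_on_UNIV_converging:
  fixes Y :: "real \<Rightarrow> 'a::metric_space"
  assumes "\<And>s. isCont Y s" "(Y \<longlongrightarrow> a) at_bot" "(Y \<longlongrightarrow> b) at_top"
  shows "uniformly_continuous_on UNIV Y"
  unfolding uniformly_continuous_on_def
proof (intro allI impI)
  fix e :: real assume "0 < e"
  from tanh_reparametrization[OF assms] obtain g
    where g: "continuous_on {-1..1} g" "g ` {-1..1} = range Y \<union> {a, b}" "\<forall>s. g (tanh s) = Y s"
    by (elim exE conjE)
  obtain d where "0 < d"
    and d: "\<forall>t\<in>{-1..1}. \<forall>t'\<in>{-1..1}. dist t' t < d \<longrightarrow> dist (g t') (g t) < e"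
    using compact_uniformly_continuous[OF g(1) compact_Icc] \<open>0 < e\<close>
    unfolding uniformly_continuous_on_def by blast
  have "dist (Y s') (Y s) < e" if "dist s' s < d" for s s'
  proof -
    have "dist (tanh s') (tanh s) < d"
      using lipschitz_onD[OF tanh_lipschitz, of s' s] that by simp
    moreover have "tanh s \<in> {-1..1}" "tanh s' \<in> {-1..1}"
      using tanh_real_bounds[of s] tanh_real_bounds[of s'] by auto
    ultimately have "dist (g (tanh s')) (g (tanh s)) < e"
      using d by blast
    then show ?thesis
      using g(3) by simp
  qed
  then show "\<exists>d>0. \<forall>s\<in>UNIV. \<forall>s'\<in>UNIV. dist s' s < d \<longrightarrow> dist (Y s') (Y s) < e"
    using \<open>0 < d\<close> by blast
qed

lemma halving_recursion_tendsto_0: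
  fixes D e :: "nat \<Rightarrow> real"
  assumes D: "\<And>j. 0 \<le> D j" "D 0 < c"
    and rec: "\<And>j. D j < c \<Longrightarrow> D (Suc j) \<le> D j / 2 + e j"
    and e: "\<And>j. e j < c / 2" "e \<longlonglongrightarrow> 0"
  shows "D \<longlonglongrightarrow> 0"
proof -
  have bounded: "D j < c" for j
  proof (induction j)
    case (Suc j)
    then show ?case
      using rec[OF Suc] e(1)[of j] by linarith
  qed (rule D(2))
  show ?thesis
  proof (rule LIMSEQ_I)
    fix \<epsilon> :: real assume "0 < \<epsilon>"
    obtain J where J: "\<And>j. J \<le> j \<Longrightarrow> e j < \<epsilon> / 4"
      using order_tendstoD(2)[OF e(2), of "\<epsilon> / 4"] \<open>0 < \<epsilon>\<close>
      unfolding eventually_sequentially by auto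
    have tail: "D (J + k) \<le> D J / 2 ^ k + \<epsilon> / 2" for k
    proof (induction k)
      case (Suc k)
      have "D (J + Suc k) \<le> D (J + k) / 2 + \<epsilon> / 4"
        using rec[OF bounded, of "J + k"] J[of "J + k"] by simp
      also have "\<dots> \<le> D J / 2 ^ Suc k + \<epsilon> / 2"
        using Suc by (simp add: field_simps)
      finally show ?case .
    qed (use \<open>0 < \<epsilon>\<close> in simp)
    obtain K where K: "\<And>k. K \<le> k \<Longrightarrow> c / 2 ^ k < \<epsilon> / 2"
      using order_tendstoD(2)[OF LIMSEQ_divide_realpow_zero[of 2 c], of "\<epsilon> / 2"] \<open>0 < \<epsilon>\<close>
      unfolding eventually_sequentially by auto
    have "norm (D n - 0) < \<epsilon>" if "J + K \<le> n" for n
    proof -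
      define k where "k = n - J"
      have n: "n = J + k" and "K \<le> k"
        using \<open>J + K \<le> n\<close> unfolding k_def by auto
      have "D J / 2 ^ k \<le> c / 2 ^ k"
        using bounded[of J] by (simp add: divide_right_mono)
      then have "D (J + k) < \<epsilon>"
        using tail[of k] K[OF \<open>K \<le> k\<close>] by linarith
      then show ?thesis
        using D(1)[of n] unfolding n by simp
    qed
    then show "\<exists>n0. \<forall>n\<ge>n0. norm (D n - 0) < \<epsilon>"
      by blast
  qed
qed

lemma tendsto_at_top_from_residue_classes:
  fixes x :: "int \<Rightarrow> 'a::topological_space"
  assumes "0 < N" and classes: "\<And>k. k < N \<Longrightarrow> ((\<lambda>j. x (m + int (j * N + k))) \<longlongrightarrow> l) sequentially"
  shows "(x \<longlongrightarrow> l) at_top"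
proof (rule topological_tendstoI)
  fix S assume "open S" "l \<in> S"
  then have "eventually (\<lambda>j. \<forall>k\<in>{..<N}. x (m + int (j * N + k)) \<in> S) sequentially"
    using classes by (intro eventually_ball_finite) (auto simp: tendsto_def)
  then obtain J where J: "\<And>j k. J \<le> j \<Longrightarrow> k < N \<Longrightarrow> x (m + int (j * N + k)) \<in> S"
    unfolding eventually_sequentially by blast
  have "x n \<in> S" if "m + int (J * N) \<le> n" for n
  proof -
    define j where "j = nat ((n - m) div int N)"
    define k where "k = nat ((n - m) mod int N)"
    have "0 \<le> n - m"
      using that of_nat_0_le_iff[of "J * N"] by linarith
    then have "n = m + int (j * N + k)"
      using \<open>0 < N\<close> unfolding j_def k_def
      by (simp add: pos_imp_zdiv_nonneg_iff)
    moreover have "k < N"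
      using \<open>0 < N\<close> unfolding k_def by (simp add: nat_less_iff)
    moreover have "J \<le> j"
      using zdiv_mono1[of "int (J * N)" "n - m" "int N"] that \<open>0 < N\<close> unfolding j_def
      by (simp add: nat_le_iff)
    ultimately show ?thesis
      using J by simp
  qed
  then show "eventually (\<lambda>n. x n \<in> S) at_top"
    unfolding eventually_at_top_linorder by blast
qed

lemma tendsto_dist_bounded:
  fixes a b :: "'a \<Rightarrow> 'b::metric_space"
  assumes "(b \<longlongrightarrow> l) F" "(r \<longlongrightarrow> 0) F" "eventually (\<lambda>j. dist (a j) (b j) \<le> r j) F"
  shows "(a \<longlongrightarrow> l) F"
proof (rule tendstoI)
  fix \<epsilon> :: real assume "0 < \<epsilon>"
  have "eventually (\<lambda>j. dist (b j) l < \<epsilon> / 2) F" "eventually (\<lambda>j. r j < \<epsilon> / 2) F"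
    using tendstoD[OF assms(1), of "\<epsilon> / 2"] order_tendstoD(2)[OF assms(2), of "\<epsilon> / 2"] \<open>0 < \<epsilon>\<close>
    by simp_all
  with assms(3) show "eventually (\<lambda>j. dist (a j) l < \<epsilon>) F"
  proof eventually_elim
    case (elim j)
    then show ?case
      using dist_triangle[of "a j" l "b j"] by linarith
  qed
qed

locale C1_family =
  fixes f :: "(real^'l) \<times> (real^'m) \<Rightarrow> real^'l"
    and f' :: "(real^'l) \<times> (real^'m) \<Rightarrow> ((real^'l) \<times> (real^'m)) \<Rightarrow>\<^sub>L (real^'l)"
  assumes has_derivative_f: "\<And>z. (f has_derivative blinfun_apply (f' z)) (at z)"
    and continuous_f': "continuous_on UNIV f'"
begin

definition partial_x :: "(real^'l) \<times> (real^'m) \<Rightarrow> (real^'l) \<Rightarrow>\<^sub>L (real^'l)" where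
  "partial_x z = f' z o\<^sub>L Blinfun (\<lambda>h. (h, 0))"

lemma partial_x_apply: "partial_x z h = f' z (h, 0)"
proof -
  have "bounded_linear (\<lambda>h::real^'l. (h, 0::real^'m))"
    by (intro bounded_linear_Pair bounded_linear_ident bounded_linear_zero)
  then show ?thesis
    by (simp add: partial_x_def bounded_linear_Blinfun_apply)
qed

lemma has_derivative_partial_x: "((\<lambda>y. f (y, \<mu>)) has_derivative partial_x (x, \<mu>)) (at x)"
proof -
  have "((\<lambda>y. (y, \<mu>)) has_derivative (\<lambda>h. (h, 0))) (at x)"
    by (auto intro!: derivative_eq_intros)
  from has_derivative_compose[OF this has_derivative_f]
  show ?thesis
    by (simp add: partial_x_apply[abs_def])
qed

lemma Dx_eq_matrix_partial_x: "Dx f x \<mu> = matrix (partial_x (x, \<mu>))"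
  unfolding Dx_def using frechet_derivative_at[OF has_derivative_partial_x] by simp

lemma isCont_f: "isCont f z"
  using has_derivative_f has_derivative_continuous by blast

lemma isCont_partial_x: "isCont partial_x z"
proof -
  have "isCont f' z"
    by (rule continuous_on_interior[OF continuous_f']) simp
  then show ?thesis
    unfolding partial_x_def by (intro continuous_intros)
qed

primrec iterate :: "(nat \<Rightarrow> real^'m) \<Rightarrow> nat \<Rightarrow> real^'l \<Rightarrow> real^'l" where
  "iterate \<nu> 0 x = x"
| "iterate \<nu> (Suc n) x = f (iterate \<nu> n x, \<nu> n)"

primrec iterate_deriv :: "(nat \<Rightarrow> real^'m) \<Rightarrow> nat \<Rightarrow> real^'l \<Rightarrow> (real^'l) \<Rightarrow>\<^sub>L (real^'l)" where
  "iterate_deriv \<nu> 0 x = id_blinfun"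
| "iterate_deriv \<nu> (Suc n) x = partial_x (iterate \<nu> n x, \<nu> n) o\<^sub>L iterate_deriv \<nu> n x"

lemma has_derivative_iterate: "(iterate \<nu> n has_derivative iterate_deriv \<nu> n x) (at x)"
proof (induction n)
  case 0
  show ?case
    by (simp add: has_derivative_ident[unfolded id_def])
next
  case (Suc n)
  from has_derivative_compose[OF Suc has_derivative_partial_x]
  show ?case
    by (simp add: blinfun_compose.rep_eq o_def)
qed

lemma iterate_fixed_point:
  assumes "f (p, \<mu>) = p"
  shows "iterate (\<lambda>_. \<mu>) n p = p" "iterate_deriv (\<lambda>_. \<mu>) n p = blinfun_pow (partial_x (p, \<mu>)) n"
  by (induction n) (simp_all add: assms flip: blinfun_pow_Suc')

lemma solution_iterate:
  assumes "\<And>n. x (n + 1) = f (x n, \<mu> n)"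
  shows "x (m + int k) = iterate (\<lambda>i. \<mu> (m + int i)) k (x m)"
proof (induction k)
  case (Suc k)
  have "x (m + int (Suc k)) = f (x (m + int k), \<mu> (m + int k))"
    using assms[of "m + int k"] by (simp add: ac_simps)
  then show ?case
    using Suc by simp
qed simp

lemma tendsto_iterate:
  assumes "\<And>i. i < n \<Longrightarrow> ((\<lambda>j. \<nu> j i) \<longlongrightarrow> \<mu>) F" and "(x \<longlongrightarrow> p) F"
  shows "((\<lambda>j. iterate (\<nu> j) n (x j)) \<longlongrightarrow> iterate (\<lambda>_. \<mu>) n p) F"
    and "((\<lambda>j. iterate_deriv (\<nu> j) n (x j)) \<longlongrightarrow> iterate_deriv (\<lambda>_. \<mu>) n p) F"
proof -
  have "((\<lambda>j. iterate (\<nu> j) n (x j)) \<longlongrightarrow> iterate (\<lambda>_. \<mu>) n p) F \<and>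
        ((\<lambda>j. iterate_deriv (\<nu> j) n (x j)) \<longlongrightarrow> iterate_deriv (\<lambda>_. \<mu>) n p) F"
    using assms(1)
  proof (induction n)
    case 0
    show ?case
      using assms(2) by simp
  next
    case (Suc n)
    then have IH: "((\<lambda>j. iterate (\<nu> j) n (x j)) \<longlongrightarrow> iterate (\<lambda>_. \<mu>) n p) F"
      "((\<lambda>j. iterate_deriv (\<nu> j) n (x j)) \<longlongrightarrow> iterate_deriv (\<lambda>_. \<mu>) n p) F"
      by simp_all
    have pair: "((\<lambda>j. (iterate (\<nu> j) n (x j), \<nu> j n)) \<longlongrightarrow> (iterate (\<lambda>_. \<mu>) n p, \<mu>)) F"
      using IH(1) Suc.prems[of n] by (intro tendsto_Pair) auto
    have "((\<lambda>j. partial_x (iterate (\<nu> j) n (x j), \<nu> j n) o\<^sub>L iterate_deriv (\<nu> j) n (x j))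
        \<longlongrightarrow> partial_x (iterate (\<lambda>_. \<mu>) n p, \<mu>) o\<^sub>L iterate_deriv (\<lambda>_. \<mu>) n p) F"
      by (intro tendsto_intros isCont_tendsto_compose[OF isCont_partial_x pair] IH(2))
    then show ?case
      using isCont_tendsto_compose[OF isCont_f pair] by simp
  qed
  then show "((\<lambda>j. iterate (\<nu> j) n (x j)) \<longlongrightarrow> iterate (\<lambda>_. \<mu>) n p) F"
    and "((\<lambda>j. iterate_deriv (\<nu> j) n (x j)) \<longlongrightarrow> iterate_deriv (\<lambda>_. \<mu>) n p) F"
    by simp_all
qed

lemma uniformly_near_iterate:
  assumes K: "compact K" and fixed: "\<And>q. q \<in> K \<Longrightarrow> f q = fst q" and "0 < \<epsilon>"
  shows "\<exists>\<delta>>0. \<forall>q\<in>K. \<forall>\<nu> x. (\<forall>i<n. dist (\<nu> i) (snd q) < \<delta>) \<and> dist x (fst q) < \<delta> \<longrightarrow>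
           dist (iterate \<nu> n x) (fst q) < \<epsilon> \<and> norm (iterate_deriv \<nu> n x - blinfun_pow (partial_x q) n) < \<epsilon>"
    (is "\<exists>\<delta>>0. \<forall>q\<in>K. \<forall>\<nu> x. ?near \<delta> q \<nu> x \<longrightarrow> ?good q \<nu> x")
proof (rule ccontr)
  assume "\<not> ?thesis"
  then have "\<forall>j. \<exists>q \<nu> x. q \<in> K \<and> ?near (inverse (real (Suc j))) q \<nu> x \<and> \<not> ?good q \<nu> x"
    by (metis inverse_positive_iff_positive of_nat_0_less_iff zero_less_Suc)
  then obtain Q V Z where QVZ: "\<And>j. Q j \<in> K" "\<And>j. ?near (inverse (real (Suc j))) (Q j) (V j) (Z j)"
    "\<And>j. \<not> ?good (Q j) (V j) (Z j)"
    by metis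
  obtain q \<phi> where "q \<in> K" "strict_mono \<phi>" and Q_lim: "(Q \<circ> \<phi>) \<longlonglongrightarrow> q"
    using compact_imp_seq_compact[OF K] QVZ(1) by (metis seq_compactE)
  have r_lim: "(\<lambda>j. inverse (real (Suc (\<phi> j)))) \<longlonglongrightarrow> 0"
    using LIMSEQ_subseq_LIMSEQ[OF LIMSEQ_inverse_real_of_nat \<open>strict_mono \<phi>\<close>] by (simp add: o_def)
  have "((\<lambda>j. V (\<phi> j) i) \<longlongrightarrow> snd q) sequentially" if "i < n" for i
    using QVZ(2) that
    by (intro tendsto_dist_bounded[OF tendsto_snd[OF Q_lim[unfolded o_def]] r_lim always_eventually])
      (simp add: less_imp_le)
  moreover have "((\<lambda>j. Z (\<phi> j)) \<longlongrightarrow> fst q) sequentially"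
    using QVZ(2)
    by (intro tendsto_dist_bounded[OF tendsto_fst[OF Q_lim[unfolded o_def]] r_lim always_eventually])
      (simp add: less_imp_le)
  ultimately have "((\<lambda>j. iterate (V (\<phi> j)) n (Z (\<phi> j))) \<longlongrightarrow> fst q) sequentially"
    "((\<lambda>j. iterate_deriv (V (\<phi> j)) n (Z (\<phi> j))) \<longlongrightarrow> blinfun_pow (partial_x q) n) sequentially"
    using tendsto_iterate[of n "\<lambda>j. V (\<phi> j)" "snd q" sequentially "\<lambda>j. Z (\<phi> j)" "fst q"]
      iterate_fixed_point[of "fst q" "snd q"] fixed[OF \<open>q \<in> K\<close>]
    by auto
  moreover have "((\<lambda>j. blinfun_pow (partial_x (Q (\<phi> j))) n) \<longlongrightarrow> blinfun_pow (partial_x q) n) sequentially"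
    using Q_lim by (intro isCont_tendsto_compose[OF isCont_blinfun_pow[OF isCont_partial_x]]) (simp add: o_def)
  ultimately have "((\<lambda>j. dist (iterate (V (\<phi> j)) n (Z (\<phi> j))) (fst (Q (\<phi> j)))) \<longlongrightarrow> 0) sequentially"
    "((\<lambda>j. norm (iterate_deriv (V (\<phi> j)) n (Z (\<phi> j)) - blinfun_pow (partial_x (Q (\<phi> j))) n))
        \<longlongrightarrow> 0) sequentially"
    using tendsto_fst[OF Q_lim[unfolded o_def]]
    by (auto intro: tendsto_eq_intros)
  then have "eventually (\<lambda>j. ?good (Q (\<phi> j)) (V (\<phi> j)) (Z (\<phi> j))) sequentially"
    using \<open>0 < \<epsilon>\<close> by (auto intro: eventually_conj dest: order_tendstoD(2))
  then show False
    using QVZ(3) by (simp add: eventually_sequentially)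
qed

lemma uniformly_contracting_iterate:
  assumes K: "compact K" and fixed: "\<And>q. q \<in> K \<Longrightarrow> f q = fst q"
    and small: "\<And>q. q \<in> K \<Longrightarrow> norm (blinfun_pow (partial_x q) N) < 1 / 4"
  shows "\<exists>\<delta>>0. \<forall>q\<in>K. \<forall>\<nu>. (\<forall>i<N. dist (\<nu> i) (snd q) < \<delta>) \<longrightarrow>
           (\<forall>x y. dist x (fst q) < \<delta> \<and> dist y (fst q) < \<delta> \<longrightarrow>
              dist (iterate \<nu> N x) (iterate \<nu> N y) \<le> dist x y / 2)"
proof -
  obtain \<delta> where "0 < \<delta>" and \<delta>: "\<forall>q\<in>K. \<forall>\<nu> x. (\<forall>i<N. dist (\<nu> i) (snd q) < \<delta>) \<and> dist x (fst q) < \<delta> \<longrightarrow>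
      dist (iterate \<nu> N x) (fst q) < 1 / 4 \<and> norm (iterate_deriv \<nu> N x - blinfun_pow (partial_x q) N) < 1 / 4"
    using uniformly_near_iterate[OF K fixed, of "1 / 4" N] by auto
  have "dist (iterate \<nu> N x) (iterate \<nu> N y) \<le> dist x y / 2"
    if q: "q \<in> K" and \<nu>: "\<forall>i<N. dist (\<nu> i) (snd q) < \<delta>" and xy: "x \<in> ball (fst q) \<delta>" "y \<in> ball (fst q) \<delta>"
    for q \<nu> x y
  proof -
    have "onorm (iterate_deriv \<nu> N z) \<le> 1 / 2" if "z \<in> ball (fst q) \<delta>" for z
    proof -
      have "norm (iterate_deriv \<nu> N z - blinfun_pow (partial_x q) N) < 1 / 4"
        using \<delta> q \<nu> that by (auto simp: dist_commute)
      then have "norm (iterate_deriv \<nu> N z) < 1 / 2"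
        using small[OF q] norm_triangle_ineq2[of "iterate_deriv \<nu> N z" "blinfun_pow (partial_x q) N"]
        by linarith
      then show ?thesis
        by (simp add: norm_blinfun.rep_eq[symmetric])
    qed
    then have "norm (iterate \<nu> N x - iterate \<nu> N y) \<le> 1 / 2 * norm (x - y)"
      using xy by (intro differentiable_bound[OF convex_ball])
        (auto intro: has_derivative_at_withinI has_derivative_iterate)
    then show ?thesis
      by (simp add: dist_norm)
  qed
  with \<open>0 < \<delta>\<close> show ?thesis
    by (auto simp: dist_commute)
qed

lemma isCont_stable_path:
  fixes X :: "real \<Rightarrow> real^'l" and \<Lambda> :: "real \<Rightarrow> real^'m"
  assumes fixed: "\<And>s. f (X s, \<Lambda> s) = X s" and conn: "connected (range (\<lambda>s. (s, X s)))"
    and spec: "\<And>s. spec_radius (Dx f (X s) (\<Lambda> s)) < 1" and \<Lambda>: "\<And>s. isCont \<Lambda> s"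
  shows "isCont X s0"
proof -
  define p where "p = X s0"
  define \<mu> where "\<mu> = \<Lambda> s0"
  have fp: "f (p, \<mu>) = p"
    unfolding p_def \<mu>_def by (rule fixed)
  obtain N where N: "norm (blinfun_pow (partial_x (p, \<mu>)) N) < 1 / 4"
    using order_tendstoD(2)[OF blinfun_pow_tendsto_0, of "partial_x (p, \<mu>)" "1 / 4"] spec[of s0]
    by (auto simp: Dx_eq_matrix_partial_x p_def \<mu>_def eventually_sequentially)
  obtain \<delta> where "0 < \<delta>" and contraction: "\<And>\<nu> x y. \<forall>i<N. dist (\<nu> i) \<mu> < \<delta> \<Longrightarrow>
      dist x p < \<delta> \<Longrightarrow> dist y p < \<delta> \<Longrightarrow> dist (iterate \<nu> N x) (iterate \<nu> N y) \<le> dist x y / 2"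
    using uniformly_contracting_iterate[of "{(p, \<mu>)}" N] fp N by auto
  have fixed_point_bound: "dist (X s) p \<le> 2 * dist (iterate (\<lambda>_. \<Lambda> s) N p) p"
    if "dist (\<Lambda> s) \<mu> < \<delta>" "dist (X s) p < \<delta>" for s
  proof -
    have "dist (X s) p \<le> dist (iterate (\<lambda>_. \<Lambda> s) N (X s)) (iterate (\<lambda>_. \<Lambda> s) N p)
        + dist (iterate (\<lambda>_. \<Lambda> s) N p) p"
      using dist_triangle iterate_fixed_point(1)[OF fixed] by metis
    also have "\<dots> \<le> dist (X s) p / 2 + dist (iterate (\<lambda>_. \<Lambda> s) N p) p"
      using contraction[of "\<lambda>_. \<Lambda> s"] that \<open>0 < \<delta>\<close> by simp
    finally show ?thesis
      by linarith
  qed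
  have drift: "((\<lambda>s. dist (iterate (\<lambda>_. \<Lambda> s) N p) p) \<longlongrightarrow> 0) (at s0)"
    using tendsto_iterate(1)[of N "\<lambda>s _. \<Lambda> s" \<mu> "at s0" "\<lambda>_. p" p] \<Lambda>[of s0]
    by (simp add: isCont_def iterate_fixed_point(1)[OF fp] tendsto_dist_iff[symmetric] flip: \<mu>_def)
  have "eventually (\<lambda>s. dist (\<Lambda> s) \<mu> < \<delta> \<and> dist (iterate (\<lambda>_. \<Lambda> s) N p) p < \<delta> / 4) (at s0)"
    using tendstoD[OF \<Lambda>[of s0, unfolded isCont_def] \<open>0 < \<delta>\<close>] order_tendstoD(2)[OF drift, of "\<delta> / 4"]
      \<open>0 < \<delta>\<close> by (auto simp: \<mu>_def intro: eventually_conj)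
  then obtain \<rho> where "0 < \<rho>" and \<rho>': "\<And>s. s \<noteq> s0 \<Longrightarrow> dist s s0 < \<rho> \<Longrightarrow>
      dist (\<Lambda> s) \<mu> < \<delta> \<and> dist (iterate (\<lambda>_. \<Lambda> s) N p) p < \<delta> / 4"
    unfolding eventually_at by auto
  have \<rho>: "dist (\<Lambda> s) \<mu> < \<delta> \<and> dist (iterate (\<lambda>_. \<Lambda> s) N p) p < \<delta> / 4" if "dist s s0 < \<rho>" for s
    using \<rho>'[OF _ that] \<open>0 < \<delta>\<close> iterate_fixed_point(1)[OF fp] by (cases "s = s0") (auto simp: \<mu>_def)
  have off_sphere: "dist (X s) p \<noteq> \<delta> / 2" if "dist s s0 < \<rho>" for s
  proof
    assume sphere: "dist (X s) p = \<delta> / 2"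
    then have "dist (X s) p \<le> 2 * dist (iterate (\<lambda>_. \<Lambda> s) N p) p"
      using fixed_point_bound \<rho>[OF that] \<open>0 < \<delta>\<close> by simp
    then show False
      using \<rho>[OF that] sphere by linarith
  qed
  \<comment> \<open>Otherwise the connected graph of \<open>X\<close> would meet the sphere of radius \<open>\<delta> / 2\<close> around \<open>p\<close>.\<close>
  have inside: "dist (X s) p < \<delta> / 2" if "dist s s0 < \<rho>" for s
  proof (rule ccontr)
    assume "\<not> ?thesis"
    with off_sphere[OF that] have "\<delta> / 2 < dist (X s) p"
      by linarith
    moreover have "dist (X s0) p - \<delta> / 2 < 0"
      using \<open>0 < \<delta>\<close> by (simp add: p_def)
    ultimately have "(dist (X (min s s0)) p - \<delta> / 2) * (dist (X (max s s0)) p - \<delta> / 2) < 0"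
      by (cases "s \<le> s0") (auto simp: mult_less_0_iff min_def max_def)
    moreover have "continuous_on UNIV (\<lambda>y. dist y p - \<delta> / 2)"
      by (intro continuous_intros)
    ultimately have "\<exists>t\<in>{min s s0..max s s0}. dist (X t) p - \<delta> / 2 = 0"
      by (intro connected_graph_IVT[OF conn]) auto
    then obtain t where t: "t \<in> {min s s0..max s s0}" "dist (X t) p - \<delta> / 2 = 0" ..
    then have "dist t s0 < \<rho>"
      using that by (auto simp: dist_real_def)
    with off_sphere t(2) show False
      by simp
  qed
  have upper: "eventually (\<lambda>s. dist (X s) p \<le> 2 * dist (iterate (\<lambda>_. \<Lambda> s) N p) p) (at s0)"
    unfolding eventually_at
  proof (intro exI[of _ \<rho>] conjI ballI impI)
    fix s assume "s \<noteq> s0 \<and> dist s s0 < \<rho>"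
    then have "dist (\<Lambda> s) \<mu> < \<delta>" "dist (X s) p < \<delta> / 2"
      using \<rho>[of s] inside[of s] by auto
    then have "dist (\<Lambda> s) \<mu> < \<delta>" "dist (X s) p < \<delta>"
      using zero_le_dist[of "X s" p] by linarith+
    then show "dist (X s) p \<le> 2 * dist (iterate (\<lambda>_. \<Lambda> s) N p) p"
      by (rule fixed_point_bound)
  qed (rule \<open>0 < \<rho>\<close>)
  have "((\<lambda>s. dist (X s) p) \<longlongrightarrow> 0) (at s0)"
    by (rule tendsto_sandwich[OF always_eventually upper tendsto_const tendsto_mult_right_zero[OF drift]])
      simp
  then show ?thesis
    unfolding isCont_def p_def by (rule tendsto_dist_iff[THEN iffD2])
qed

end

lemma filterlim_scaled_int_at_top:
  fixes r :: real
  assumes "0 < r"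
  shows "filterlim (\<lambda>m::int. r * of_int (m + c)) at_top at_top"
proof -
  have "filterlim (\<lambda>m::int. real_of_int c + real_of_int m) at_top at_top"
    by (rule filterlim_tendsto_add_at_top[OF tendsto_const filterlim_real_of_int_at_top])
  then have "filterlim (\<lambda>m::int. r * (real_of_int c + real_of_int m)) at_top at_top"
    by (rule filterlim_tendsto_pos_mult_at_top[OF tendsto_const assms])
  then show ?thesis
    by (simp add: add.commute)
qed

lemma filterlim_int_progression:
  assumes "0 < N"
  shows "filterlim (\<lambda>j. m + int (j * N)) at_top sequentially"
  unfolding filterlim_at_top eventually_sequentially
proof
  fix z :: int
  have "z \<le> m + int (j * N)" if "nat (z - m) \<le> j" for j
  proof -
    have "z - m \<le> int j"
      using that by linarith
    also have "\<dots> \<le> int (j * N)"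
      using assms by (intro of_nat_mono) simp
    finally show ?thesis
      by simp
  qed
  then show "\<exists>j0. \<forall>j\<ge>j0. z \<le> m + int (j * N)"
    by blast
qed

locale stable_path_system = C1_family f f'
  for f :: "(real^'l) \<times> (real^'m) \<Rightarrow> real^'l"
    and f' :: "(real^'l) \<times> (real^'m) \<Rightarrow> ((real^'l) \<times> (real^'m)) \<Rightarrow>\<^sub>L (real^'l)" +
  fixes \<Lambda> :: "real \<Rightarrow> real^'m" and X :: "real \<Rightarrow> real^'l"
    and lm lp :: "real^'m" and Xm Xp :: "real^'l"
  assumes path_fixed: "\<And>s. f (X s, \<Lambda> s) = X s"
    and end_fixed: "f (Xm, lm) = Xm" "f (Xp, lp) = Xp"
    and continuous_X: "\<And>s. isCont X s" and continuous_\<Lambda>: "\<And>s. isCont \<Lambda> s"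
    and X_limits: "(X \<longlongrightarrow> Xm) at_bot" "(X \<longlongrightarrow> Xp) at_top"
    and \<Lambda>_limits: "(\<Lambda> \<longlongrightarrow> lm) at_bot" "(\<Lambda> \<longlongrightarrow> lp) at_top"
    and stable: "\<And>s. spec_radius (Dx f (X s) (\<Lambda> s)) < 1"
      "spec_radius (Dx f Xm lm) < 1" "spec_radius (Dx f Xp lp) < 1"
begin

definition extended_path :: "((real^'l) \<times> (real^'m)) set" where
  "extended_path = range (\<lambda>s. (X s, \<Lambda> s)) \<union> {(Xm, lm), (Xp, lp)}"

lemma compact_extended_path: "compact extended_path"
  unfolding extended_path_def
  by (intro compact_range_Un_limits tendsto_Pair X_limits \<Lambda>_limits continuous_intros
      continuous_X continuous_\<Lambda>)

lemma extended_path_fixed: "q \<in> extended_path \<Longrightarrow> f q = fst q"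
  using path_fixed end_fixed unfolding extended_path_def by auto

lemma extended_path_powers_tendsto_0:
  "q \<in> extended_path \<Longrightarrow> (\<lambda>k. norm (blinfun_pow (partial_x q) k)) \<longlonglongrightarrow> 0"
  using stable unfolding extended_path_def
  by (auto intro!: blinfun_pow_tendsto_0 simp: Dx_eq_matrix_partial_x)

lemma uniformly_continuous_path: "uniformly_continuous_on UNIV (\<lambda>s. (X s, \<Lambda> s))"
  using continuous_X continuous_\<Lambda>
  by (intro uniformly_continuous_on_UNIV_converging[OF _ tendsto_Pair[OF X_limits(1) \<Lambda>_limits(1)]
      tendsto_Pair[OF X_limits(2) \<Lambda>_limits(2)]] continuous_intros)

end

locale tracking_scales = stable_path_system +
  fixes N :: nat and \<delta> \<eta> :: real
  assumes N_pos: "0 < N" and \<delta>_pos: "0 < \<delta>" and \<eta>_pos: "0 < \<eta>"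
    and contracting: "\<And>s t x y. \<forall>i<N. \<bar>t i - s\<bar> < \<eta> \<Longrightarrow> dist x (X s) < \<delta> \<Longrightarrow> dist y (X s) < \<delta> \<Longrightarrow>
      dist (iterate (\<lambda>i. \<Lambda> (t i)) N x) (iterate (\<lambda>i. \<Lambda> (t i)) N y) \<le> dist x y / 2"
    and drifting: "\<And>s t. \<forall>i<N. \<bar>t i - s\<bar> < \<eta> \<Longrightarrow>
      dist (iterate (\<lambda>i. \<Lambda> (t i)) N (X s)) (X s) < \<delta> / 8"
    and oscillation: "\<And>s s'. \<bar>s - s'\<bar> < \<eta> \<Longrightarrow> dist (X s) (X s') < \<delta> / 8"
begin

definition block_error :: "real \<Rightarrow> int \<Rightarrow> real" where
  "block_error r m =
     dist (iterate (\<lambda>i. \<Lambda> (r * of_int (m + int i))) N (X (r * of_int m))) (X (r * of_int m))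
     + dist (X (r * of_int m)) (X (r * of_int (m + int N)))"

lemma block_times_close:
  fixes r :: real
  assumes "0 < r" "r * real N < \<eta>"
  shows "\<forall>i<N. \<bar>r * of_int (m + int i) - r * of_int m\<bar> < \<eta>"
proof (intro allI impI)
  fix i assume "i < N"
  then have "r * real i < r * real N"
    using assms(1) by simp
  moreover have "\<bar>r * of_int (m + int i) - r * of_int m\<bar> = r * real i"
    using assms(1) by (simp add: algebra_simps)
  ultimately show "\<bar>r * of_int (m + int i) - r * of_int m\<bar> < \<eta>"
    using assms(2) by linarith
qed

lemma block_error_small:
  fixes r :: real
  assumes "0 < r" "r * real N < \<eta>"
  shows "block_error r m < \<delta> / 4"
proof -
  have "\<bar>r * of_int m - r * of_int (m + int N)\<bar> < \<eta>"
    using assms by (simp add: algebra_simps)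
  then have "dist (X (r * of_int m)) (X (r * of_int (m + int N))) < \<delta> / 8"
    by (rule oscillation)
  moreover have "dist (iterate (\<lambda>i. \<Lambda> (r * of_int (m + int i))) N (X (r * of_int m))) (X (r * of_int m))
      < \<delta> / 8"
    by (rule drifting[OF block_times_close[OF assms]])
  ultimately show ?thesis
    unfolding block_error_def by linarith
qed

lemma block_contraction:
  fixes r :: real
  assumes "0 < r" "r * real N < \<eta>" and solution: "\<And>n. x (n + 1) = f (x n, \<Lambda> (r * of_int n))"
    and close: "dist (x m) (X (r * of_int m)) < \<delta>"
  shows "dist (x (m + int N)) (X (r * of_int (m + int N)))
           \<le> dist (x m) (X (r * of_int m)) / 2 + block_error r m"
proof -
  let ?\<Phi> = "iterate (\<lambda>i. \<Lambda> (r * of_int (m + int i))) N"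
  have step: "x (m + int N) = ?\<Phi> (x m)"
    by (rule solution_iterate[where \<mu> = "\<lambda>n. \<Lambda> (r * of_int n)", OF solution])
  have "dist (?\<Phi> (x m)) (?\<Phi> (X (r * of_int m))) \<le> dist (x m) (X (r * of_int m)) / 2"
    using contracting[OF block_times_close[OF assms(1,2)] close] \<delta>_pos by simp
  moreover have "dist (?\<Phi> (x m)) (X (r * of_int (m + int N)))
      \<le> dist (?\<Phi> (x m)) (?\<Phi> (X (r * of_int m))) + block_error r m"
    unfolding block_error_def
    using dist_triangle[of "?\<Phi> (x m)" "X (r * of_int (m + int N))" "?\<Phi> (X (r * of_int m))"]
      dist_triangle[of "?\<Phi> (X (r * of_int m))" "X (r * of_int (m + int N))" "X (r * of_int m)"]
    by linarith
  ultimately show ?thesis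
    unfolding step by linarith
qed

lemma block_error_tendsto_0:
  fixes r :: real
  assumes "0 < r"
  shows "(block_error r \<longlongrightarrow> 0) at_top"
proof -
  have time: "filterlim (\<lambda>m. r * of_int (m + c)) at_top at_top" for c
    by (rule filterlim_scaled_int_at_top[OF assms])
  have "((\<lambda>m. \<Lambda> (r * of_int (m + int i))) \<longlongrightarrow> lp) at_top" for i
    by (rule filterlim_compose[OF \<Lambda>_limits(2) time])
  moreover have X_lim: "((\<lambda>m. X (r * of_int (m + c))) \<longlongrightarrow> Xp) at_top" for c
    by (rule filterlim_compose[OF X_limits(2) time])
  ultimately have "((\<lambda>m. iterate (\<lambda>i. \<Lambda> (r * of_int (m + int i))) N (X (r * of_int m))) \<longlongrightarrow> Xp) at_top"
    using tendsto_iterate(1)[of N "\<lambda>m i. \<Lambda> (r * of_int (m + int i))" lp at_top "\<lambda>m. X (r * of_int m)" Xp]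
      X_lim[of 0] iterate_fixed_point(1)[OF end_fixed(2)] by simp
  then show ?thesis
    unfolding block_error_def
    using X_lim[of 0] X_lim[of "int N"] by (auto intro!: tendsto_eq_intros)
qed

lemma solution_near_path_at_bot:
  fixes r :: real
  assumes "0 < r" and "(x \<longlongrightarrow> Xm) at_bot"
  obtains m where "dist (x m) (X (r * of_int m)) < \<delta> / 2"
proof -
  obtain m1 where m1: "\<And>n. n \<le> m1 \<Longrightarrow> dist (x n) Xm < \<delta> / 4"
    using tendstoD[OF assms(2), of "\<delta> / 4"] \<delta>_pos unfolding eventually_at_bot_linorder by auto
  obtain s1 where s1: "\<And>s. s \<le> s1 \<Longrightarrow> dist (X s) Xm < \<delta> / 4"
    using tendstoD[OF X_limits(1), of "\<delta> / 4"] \<delta>_pos unfolding eventually_at_bot_linorder by auto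
  define m where "m = min m1 \<lfloor>s1 / r\<rfloor>"
  have "of_int m \<le> s1 / r"
    unfolding m_def by (meson min.cobounded2 of_int_floor_le of_int_le_iff order_trans)
  then have "r * of_int m \<le> s1"
    using assms(1) by (simp add: field_simps)
  then have "dist (X (r * of_int m)) Xm < \<delta> / 4"
    by (rule s1)
  moreover have "dist (x m) Xm < \<delta> / 4"
    by (rule m1) (simp add: m_def)
  ultimately have "dist (x m) (X (r * of_int m)) < \<delta> / 2"
    using dist_triangle2[of "x m" "X (r * of_int m)" Xm] by linarith
  then show ?thesis
    by (rule that)
qed

lemma solution_tracks_blocks:
  fixes r :: real
  assumes "0 < r" "r * real N < \<eta>" and solution: "\<And>n. x (n + 1) = f (x n, \<Lambda> (r * of_int n))"
    and start: "dist (x m0) (X (r * of_int m0)) < \<delta> / 2"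
  shows "((\<lambda>j. x (m0 + int (j * N))) \<longlongrightarrow> Xp) sequentially"
proof -
  define D where "D j = dist (x (m0 + int (j * N))) (X (r * of_int (m0 + int (j * N))))" for j
  have recursion: "D (Suc j) \<le> D j / 2 + block_error r (m0 + int (j * N))" if "D j < \<delta> / 2" for j
  proof -
    have next_block: "m0 + int (Suc j * N) = m0 + int (j * N) + int N"
      by simp
    have "dist (x (m0 + int (j * N))) (X (r * of_int (m0 + int (j * N)))) < \<delta>"
      using that \<delta>_pos unfolding D_def by linarith
    then show ?thesis
      unfolding D_def next_block by (rule block_contraction[OF assms(1-3)])
  qed
  have errors_tendsto_0: "((\<lambda>j. block_error r (m0 + int (j * N))) \<longlongrightarrow> 0) sequentially"
    by (rule filterlim_compose[OF block_error_tendsto_0[OF assms(1)] filterlim_int_progression[OF N_pos]])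
  have "0 \<le> D j" "D 0 < \<delta> / 2" for j
    using start by (simp_all add: D_def)
  moreover have "block_error r (m0 + int (j * N)) < \<delta> / 2 / 2" for j
    using block_error_small[OF assms(1,2)] by simp
  ultimately have D_lim: "D \<longlonglongrightarrow> 0"
    using halving_recursion_tendsto_0[of D "\<delta> / 2" "\<lambda>j. block_error r (m0 + int (j * N))"]
      recursion errors_tendsto_0 by blast
  have X_lim: "((\<lambda>j. X (r * of_int (m0 + int (j * N)))) \<longlongrightarrow> Xp) sequentially"
    by (rule filterlim_compose[OF X_limits(2) filterlim_compose[OF filterlim_scaled_int_at_top[OF assms(1),
          of 0, simplified] filterlim_int_progression[OF N_pos]]])
  show ?thesis
    by (rule tendsto_dist_bounded[OF X_lim D_lim always_eventually]) (simp add: D_def)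
qed

lemma solution_tendsto_within_blocks:
  fixes r :: real
  assumes "0 < r" and solution: "\<And>n. x (n + 1) = f (x n, \<Lambda> (r * of_int n))"
    and blocks: "((\<lambda>j. x (m0 + int (j * N))) \<longlongrightarrow> Xp) sequentially"
  shows "((\<lambda>j. x (m0 + int (j * N + k))) \<longlongrightarrow> Xp) sequentially"
proof -
  have "((\<lambda>j. \<Lambda> (r * of_int (m0 + int (j * N) + int i))) \<longlongrightarrow> lp) sequentially" for i
    by (rule filterlim_compose[OF \<Lambda>_limits(2) filterlim_compose[OF filterlim_scaled_int_at_top[OF assms(1)]
          filterlim_int_progression[OF N_pos]]])
  from tendsto_iterate(1)[OF this blocks]
  have "((\<lambda>j. iterate (\<lambda>i. \<Lambda> (r * of_int (m0 + int (j * N) + int i))) k (x (m0 + int (j * N))))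
      \<longlongrightarrow> Xp) sequentially"
    by (simp only: iterate_fixed_point(1)[OF end_fixed(2)])
  moreover have "x (m0 + int (j * N + k))
      = iterate (\<lambda>i. \<Lambda> (r * of_int (m0 + int (j * N) + int i))) k (x (m0 + int (j * N)))" for j
    using solution_iterate[where \<mu> = "\<lambda>n. \<Lambda> (r * of_int n)", OF solution, of "m0 + int (j * N)" k]
    by (simp add: add.assoc)
  ultimately show ?thesis
    by simp
qed

theorem solution_tendsto_Xp:
  fixes r :: real
  assumes "0 < r" "r * real N < \<eta>" and solution: "\<And>n. x (n + 1) = f (x n, \<Lambda> (r * of_int n))"
    and "(x \<longlongrightarrow> Xm) at_bot"
  shows "(x \<longlongrightarrow> Xp) at_top"
proof -
  obtain m0 where "dist (x m0) (X (r * of_int m0)) < \<delta> / 2"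
    using solution_near_path_at_bot[OF assms(1,4)] .
  then have "((\<lambda>j. x (m0 + int (j * N))) \<longlongrightarrow> Xp) sequentially"
    by (rule solution_tracks_blocks[OF assms(1-3)])
  then show ?thesis
    by (intro tendsto_at_top_from_residue_classes[OF N_pos] solution_tendsto_within_blocks[OF assms(1,3)])
qed

end

context stable_path_system
begin

lemma tracking_scales_exist: "\<exists>N \<delta> \<eta>. tracking_scales f f' \<Lambda> X lm lp Xm Xp N \<delta> \<eta>"
proof -
  obtain N where "0 < N" and N: "\<And>q. q \<in> extended_path \<Longrightarrow> norm (blinfun_pow (partial_x q) N) < 1 / 4"
    by (rule uniform_blinfun_pow_less[OF compact_extended_path isCont_partial_x
          extended_path_powers_tendsto_0, of "1 / 4"]) auto
  obtain \<delta> where "0 < \<delta>" and contracting: "\<forall>q\<in>extended_path. \<forall>\<nu>. (\<forall>i<N. dist (\<nu> i) (snd q) < \<delta>) \<longrightarrow>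
      (\<forall>x y. dist x (fst q) < \<delta> \<and> dist y (fst q) < \<delta> \<longrightarrow>
         dist (iterate \<nu> N x) (iterate \<nu> N y) \<le> dist x y / 2)"
    using uniformly_contracting_iterate[OF compact_extended_path extended_path_fixed N] by blast
  obtain d where "0 < d" and near: "\<forall>q\<in>extended_path. \<forall>\<nu> x.
      (\<forall>i<N. dist (\<nu> i) (snd q) < d) \<and> dist x (fst q) < d \<longrightarrow> dist (iterate \<nu> N x) (fst q) < \<delta> / 8"
    using uniformly_near_iterate[OF compact_extended_path extended_path_fixed, of "\<delta> / 8" N] \<open>0 < \<delta>\<close>
    by auto
  obtain \<eta> where "0 < \<eta>" and \<eta>: "\<forall>s s'. dist s' s < \<eta> \<longrightarrow>
      dist (X s', \<Lambda> s') (X s, \<Lambda> s) < min (min \<delta> d) (\<delta> / 8)"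
    using uniformly_continuous_path \<open>0 < \<delta>\<close> \<open>0 < d\<close> unfolding uniformly_continuous_on_def
    by (metis (no_types, lifting) UNIV_I min_less_iff_conj zero_less_divide_iff zero_less_numeral)
  have close: "dist (X s) (X s') < \<delta> / 8" "dist (\<Lambda> s') (\<Lambda> s) < min \<delta> d" if "\<bar>s - s'\<bar> < \<eta>" for s s'
  proof -
    have "dist (X s', \<Lambda> s') (X s, \<Lambda> s) < min (min \<delta> d) (\<delta> / 8)"
      using \<eta> that by (simp add: dist_real_def abs_minus_commute)
    then show "dist (X s) (X s') < \<delta> / 8" "dist (\<Lambda> s') (\<Lambda> s) < min \<delta> d"
      using dist_fst_le[of "(X s', \<Lambda> s')" "(X s, \<Lambda> s)"] dist_snd_le[of "(X s', \<Lambda> s')" "(X s, \<Lambda> s)"]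
      by (simp_all add: dist_commute)
  qed
  have "tracking_scales f f' \<Lambda> X lm lp Xm Xp N \<delta> \<eta>"
  proof unfold_locales
    show "0 < N" "0 < \<delta>" "0 < \<eta>"
      by fact+
  next
    fix s t x y
    assume times: "\<forall>i<N. \<bar>t i - s\<bar> < \<eta>" and "dist x (X s) < \<delta>" "dist y (X s) < \<delta>"
    have "(X s, \<Lambda> s) \<in> extended_path"
      unfolding extended_path_def by blast
    moreover have "\<forall>i<N. dist (\<Lambda> (t i)) (snd (X s, \<Lambda> s)) < \<delta>"
      using times close(2)[of s "t _"] by (simp add: abs_minus_commute)
    ultimately show "dist (iterate (\<lambda>i. \<Lambda> (t i)) N x) (iterate (\<lambda>i. \<Lambda> (t i)) N y) \<le> dist x y / 2"
      using contracting \<open>dist x (X s) < \<delta>\<close> \<open>dist y (X s) < \<delta>\<close> by simp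
  next
    fix s t
    assume times: "\<forall>i<N. \<bar>t i - s\<bar> < \<eta>"
    have "(X s, \<Lambda> s) \<in> extended_path"
      unfolding extended_path_def by blast
    moreover have "\<forall>i<N. dist (\<Lambda> (t i)) (snd (X s, \<Lambda> s)) < d"
      using times close(2)[of s "t _"] by (simp add: abs_minus_commute)
    ultimately show "dist (iterate (\<lambda>i. \<Lambda> (t i)) N (X s)) (X s) < \<delta> / 8"
      using near \<open>0 < d\<close> by (metis dist_self fst_conv)
  next
    fix s s' :: real
    assume "\<bar>s - s'\<bar> < \<eta>"
    then show "dist (X s) (X s') < \<delta> / 8"
      by (rule close(1))
  qed
  then show ?thesis
    by blast
qed

theorem slowly_shifted_solutions_tendsto_Xp:
  "\<exists>r0>0. \<forall>r. 0 < r \<and> r < r0 \<longrightarrow>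
     (\<forall>x :: int \<Rightarrow> real^'l. (\<forall>n. x (n + 1) = f (x n, \<Lambda> (r * of_int n))) \<and> (x \<longlongrightarrow> Xm) at_bot
        \<longrightarrow> (x \<longlongrightarrow> Xp) at_top)"
proof -
  obtain N \<delta> \<eta> where "tracking_scales f f' \<Lambda> X lm lp Xm Xp N \<delta> \<eta>"
    using tracking_scales_exist by blast
  then interpret tracking_scales f f' \<Lambda> X lm lp Xm Xp N \<delta> \<eta> .
  show ?thesis
  proof (intro exI[of _ "\<eta> / real N"] conjI allI impI)
    show "0 < \<eta> / real N"
      using \<eta>_pos N_pos by simp
    fix r :: real and x :: "int \<Rightarrow> real^'l"
    assume "0 < r \<and> r < \<eta> / real N"
      and "(\<forall>n. x (n + 1) = f (x n, \<Lambda> (r * of_int n))) \<and> (x \<longlongrightarrow> Xm) at_bot"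
    then show "(x \<longlongrightarrow> Xp) at_top"
      using N_pos by (intro solution_tendsto_Xp) (auto simp: field_simps)
  qed
qed

end

context C1_family
begin

lemma stable_path_systemI:
  assumes "parameter_shift \<Lambda> lm lp" and "stable_path f \<Lambda> lm lp X Xm Xp"
  shows "stable_path_system f f' \<Lambda> X lm lp Xm Xp"
proof -
  obtain \<Lambda>' where "\<And>s. (\<Lambda> has_vector_derivative \<Lambda>' s) (at s)"
    and \<Lambda>_limits: "(\<Lambda> \<longlongrightarrow> lm) at_bot" "(\<Lambda> \<longlongrightarrow> lp) at_top"
    using assms(1) unfolding parameter_shift_def by blast
  then have continuous_\<Lambda>: "isCont \<Lambda> s" for s
    using has_vector_derivative_continuous by blast
  have path: "\<And>s. f (X s, \<Lambda> s) = X s" "connected (range (\<lambda>s. (s, X s)))"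
    "(X \<longlongrightarrow> Xm) at_bot" "(X \<longlongrightarrow> Xp) at_top" "f (Xm, lm) = Xm" "f (Xp, lp) = Xp"
    "\<And>s. spec_radius (Dx f (X s) (\<Lambda> s)) < 1" "spec_radius (Dx f Xm lm) < 1" "spec_radius (Dx f Xp lp) < 1"
    using assms(2) unfolding stable_path_def by blast+
  have "isCont X s" for s
    using isCont_stable_path[OF path(1,2,7) continuous_\<Lambda>] .
  then show ?thesis
    using path continuous_\<Lambda> \<Lambda>_limits by unfold_locales auto
qed

end

theorem mainTheorem4:
  fixes f :: "(real^'l) \<times> (real^'m) \<Rightarrow> real^'l"
    and \<Lambda> :: "real \<Rightarrow> real^'m" and lm lp :: "real^'m"
    and X :: "real \<Rightarrow> real^'l" and Xm Xp :: "real^'l"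
  assumes "C1_map f"
    and "parameter_shift \<Lambda> lm lp"
    and "stable_path f \<Lambda> lm lp X Xm Xp"
  shows "\<exists>r0>0. \<forall>r. 0 < r \<and> r < r0 \<longrightarrow>
           (\<forall>x :: int \<Rightarrow> real^'l.
              (\<forall>n. x (n + 1) = f (x n, \<Lambda> (r * of_int n))) \<and> (x \<longlongrightarrow> Xm) at_bot
              \<longrightarrow> (x \<longlongrightarrow> Xp) at_top)"
proof -
  obtain f' where "\<And>z. (f has_derivative blinfun_apply (f' z)) (at z)" "continuous_on UNIV f'"
    using assms(1) unfolding C1_map_def by blast
  then interpret C1_family f f'
    by unfold_locales
  interpret stable_path_system f f' \<Lambda> X lm lp Xm Xp
    using assms(2,3) by (rule stable_path_systemI)
  show ?thesis
    by (rule slowly_shifted_solutions_tendsto_Xp)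
qed

end
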